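(* Under the standing setup, assume that $f$ is bounded, i.e. $\sup_{q\in\mathcal P}\|f_q\|_\infty<\infty$ (which implies $\sup_{q\in\mathcal P}\|q\|<\infty$). Let $\Sigma=(\Sigma(t))_{t\ge0}$ be the Nisio semigroup of $(\mathcal P,0)$, i.e. the Nisio semigroup constructed with $f_q$ replaced by $0$ for all $q\in\mathcal P$. Then $s\mapsto\Sigma(s)v$ is continuous for every $v\in\mathbb R^d$, and for all $u_0\in\mathbb R^d$ and $t\ge0$, $\mathscr S(t)u_0-u_0\le\int_0^t\Sigma(s)\mathcal Qu_0\,ds$ (componentwise).
   Context: Standing setup: $d\in\mathbb N$; vectors in $\mathbb R^d$ with $\|u\|_\infty=\max_i|u_i|$; $\|a\|$ is the operator norm of $a\in\mathbb R^{d\times d}$ w.r.t. $\|\cdot\|_\infty$; inequalities, integrals and suprema of vectors are componentwise; reals are identified with constant vectors. A $Q$-matrix is $q\in\mathbb R^{d\times d}$ with $q_{ii}\le0$, $q_{ij}\ge0$ ($i\ne j$), $\sum_jq_{ij}=0$. Let $\mathcal P$ be a set of $Q$-matrices and $f=(f_q)_{q\in\mathcal P}\subset\mathbb R^d$ with $\sup_{q\in\mathcal P}f_q=f_{q_0}=0$ for some $q_0\in\mathcal P$, such that $\mathcal Qu:=\sup_{q\in\mathcal P}(qu+f_q)$ is finite for every $u\in\mathbb R^d$. For $q\in\mathcal P$, $t\ge0$: $S_q(t)u_0:=e^{tq}u_0+\int_0^te^{sq}f_q\,ds$. For $h\ge0$: $\mathcal E_hu_0:=\sup_{q\in\mathcal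 P}S_q(h)u_0$. $P$ is the set of finite subsets $\pi\subset[0,\infty)$ with $0\in\pi$; $P_t:=\{\pi\in P:\max\pi=t\}$. For $\pi=\{t_0,\dots,t_m\}$ with $0=t_0<\dots<t_m$, $m\ge1$, $\mathcal E_\pi:=\mathcal E_{t_1-t_0}\circ\cdots\circ\mathcal E_{t_m-t_{m-1}}$, and $\mathcal E_{\{0\}}:=\mathcal E_0$. The Nisio semigroup of $(\mathcal P,f)$ is $\mathscr S(t)u_0:=\sup_{\pi\in P_t}\mathcal E_\pi u_0$. *)

theory Defs
  imports "HOL-Analysis.Analysis"
begin

text \<open>Vectors in R^d are real^'n (finite index type 'n, d = CARD('n));
 matrices are real^'n^'n; the order on vectors is componentwise (less_eq_vec).\<close>

definition is_Qmatrix :: "real^'n^'n \<Rightarrow> bool" where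
  "is_Qmatrix q \<longleftrightarrow> (\<forall>i. q$i$i \<le> 0) \<and> (\<forall>i j. i \<noteq> j \<longrightarrow> q$i$j \<ge> 0)
     \<and> (\<forall>i. (\<Sum>j\<in>UNIV. q$i$j) = 0)"

primrec matpow :: "real^'n^'n \<Rightarrow> nat \<Rightarrow> real^'n^'n" where
  "matpow q 0 = mat 1"
| "matpow q (Suc k) = q ** matpow q k"

definition mexp :: "real \<Rightarrow> real^'n^'n \<Rightarrow> real^'n^'n" where
  "mexp t q = (\<Sum>k. ((t ^ k) / fact k) *\<^sub>R matpow q k)"

definition vsup :: "'a set \<Rightarrow> ('a \<Rightarrow> real^'n) \<Rightarrow> real^'n" where
  "vsup A g = (\<chi> i. SUP a\<in>A. g a $ i)"

definition Sq :: "(real^'n^'n \<Rightarrow> real^'n) \<Rightarrow> real^'n^'n \<Rightarrow> real \<Rightarrow> real^'n \<Rightarrow> real^'n" where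
  "Sq f q t u0 = mexp t q *v u0 + integral {0..t} (\<lambda>s. mexp s q *v f q)"

definition Qop :: "(real^'n^'n) set \<Rightarrow> (real^'n^'n \<Rightarrow> real^'n) \<Rightarrow> real^'n \<Rightarrow> real^'n" where
  "Qop P f u = vsup P (\<lambda>q. q *v u + f q)"

definition Eh :: "(real^'n^'n) set \<Rightarrow> (real^'n^'n \<Rightarrow> real^'n) \<Rightarrow> real \<Rightarrow> real^'n \<Rightarrow> real^'n" where
  "Eh P f h u0 = vsup P (\<lambda>q. Sq f q h u0)"

fun Echain :: "(real \<Rightarrow> real^'n \<Rightarrow> real^'n) \<Rightarrow> real list \<Rightarrow> real^'n \<Rightarrow> real^'n" where
  "Echain E (a # b # r) u = E (b - a) (Echain E (b # r) u)"
| "Echain E _ u = u"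

definition Epi :: "(real^'n^'n) set \<Rightarrow> (real^'n^'n \<Rightarrow> real^'n) \<Rightarrow> real set \<Rightarrow> real^'n \<Rightarrow> real^'n" where
  "Epi P f \<pi> u0 = (if \<pi> = {0} then Eh P f 0 u0
                    else Echain (Eh P f) (sorted_list_of_set \<pi>) u0)"

definition partitions :: "real \<Rightarrow> real set set" where
  "partitions t = {\<pi>. finite \<pi> \<and> \<pi> \<subseteq> {0..} \<and> 0 \<in> \<pi> \<and> Max \<pi> = t}"

definition nisio :: "(real^'n^'n) set \<Rightarrow> (real^'n^'n \<Rightarrow> real^'n) \<Rightarrow> real \<Rightarrow> real^'n \<Rightarrow> real^'n" where
  "nisio P f t u0 = vsup (partitions t) (\<lambda>\<pi>. Epi P f \<pi> u0)"

end

theory Submission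
  imports Defs
begin

text \<open>
  Write E_h for the one-step operators of (P, 0), i.e. E_h v = sup_q e^{hq} v, and S0 for
  their Nisio semigroup (Sigma in the statement). Since each e^{hq} is a positive linear map
  fixing constants, every E_h is monotone, nonexpansive in the maximum norm and moves v by at
  most h sup_q |qv|; by the semigroup law of e^{hq} it is also subadditive in h. Hence refining
  a partition can only increase the chain E_{t_1 - t_0} ... E_{t_m - t_(m-1)} v, so the
  partitions are directed, and S0(t) v is Lipschitz in t. Directedness gives
  e^{hq} S0(s) v <= S0(h + s) v. The integral inequality then follows by induction along a
  partition: S_q(h) u - u = int_0^h e^{sq} (qu + f_q) ds <= int_0^h S0(s) Qu ds, and one more
  step of length h shifts the accumulated integral by h.
\<close>

section \<open>Componentwise order and the maximum norm\<close>

lemma vec_le_epsilon: "(\<And>e. 0 < e \<Longrightarrow> x \<le> y + vec e) \<Longrightarrow> x \<le> (y::real^'n)"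
  unfolding less_eq_vec_def by (auto intro: field_le_epsilon)

lemma integral_le_cart:
  fixes f g :: "real \<Rightarrow> real^'n"
  assumes "f integrable_on S" "g integrable_on S" "\<And>x. x \<in> S \<Longrightarrow> f x \<le> g x"
  shows "integral S f \<le> integral S g"
  unfolding less_eq_vec_def
proof
  fix i
  have "integral S (\<lambda>x. f x $ i) \<le> integral S (\<lambda>x. g x $ i)"
    using integrable_linear[OF assms(1) bounded_linear_vec_nth]
      integrable_linear[OF assms(2) bounded_linear_vec_nth] assms(3)
    by (intro integral_le) (auto simp: less_eq_vec_def o_def)
  then show "integral S f $ i \<le> integral S g $ i"
    using assms(1,2) by simp
qed

lemma infnorm_le_cart: "infnorm (x::real^'n) \<le> c \<longleftrightarrow> (\<forall>i. \<bar>x $ i\<bar> \<le> c)"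
proof -
  have "{\<bar>x $ i\<bar> |i. i \<in> UNIV} = range (\<lambda>i. \<bar>x $ i\<bar>)" by auto
  then show ?thesis
    unfolding infnorm_cart by (simp add: cSup_le_iff bdd_above_finite)
qed

lemma infnorm_diff_le_cart:
  "infnorm (w - v :: real^'n) \<le> c \<longleftrightarrow> w \<le> v + vec c \<and> v \<le> w + vec c"
  unfolding infnorm_le_cart less_eq_vec_def by (auto simp: abs_le_iff algebra_simps)

lemma vsup_nth: "vsup A g $ i = (SUP a\<in>A. g a $ i)"
  unfolding vsup_def by simp

lemma vsup_upper: "a \<in> A \<Longrightarrow> (\<And>i. bdd_above ((\<lambda>a. g a $ i) ` A)) \<Longrightarrow> g a \<le> vsup A g"
  unfolding less_eq_vec_def vsup_nth by (auto intro: cSUP_upper)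

lemma vsup_least: "A \<noteq> {} \<Longrightarrow> (\<And>a. a \<in> A \<Longrightarrow> g a \<le> y) \<Longrightarrow> vsup A g \<le> y"
  unfolding less_eq_vec_def vsup_nth by (auto intro: cSUP_least)

lemma vsup_const: "A \<noteq> {} \<Longrightarrow> vsup A (\<lambda>_. v) = v"
  unfolding vsup_def by (simp add: vec_eq_iff)

section \<open>Bounded endomorphisms as a Banach algebra\<close>

text \<open>Wrapped in a type with
  composition as product they form a Banach algebra, so that mexp becomes the abstract exp and
  inherits exp_add_commuting and the derivative of exp (t A).\<close>

typedef (overloaded) 'a blinop = "UNIV :: ('a::real_normed_vector \<Rightarrow>\<^sub>L 'a) set"
  morphisms blinop_rep Blinop by auto

setup_lifting type_definition_blinop

instantiation blinop :: (real_normed_vector) real_normed_vector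
begin
lift_definition norm_blinop :: "'a blinop \<Rightarrow> real" is norm .
lift_definition minus_blinop :: "'a blinop \<Rightarrow> 'a blinop \<Rightarrow> 'a blinop" is "(-)" .
lift_definition plus_blinop :: "'a blinop \<Rightarrow> 'a blinop \<Rightarrow> 'a blinop" is "(+)" .
lift_definition uminus_blinop :: "'a blinop \<Rightarrow> 'a blinop" is "uminus" .
lift_definition zero_blinop :: "'a blinop" is "0" .
lift_definition scaleR_blinop :: "real \<Rightarrow> 'a blinop \<Rightarrow> 'a blinop" is "scaleR" .
definition dist_blinop :: "'a blinop \<Rightarrow> 'a blinop \<Rightarrow> real"
  where "dist_blinop a b = norm (a - b)"
definition uniformity_blinop :: "('a blinop \<times> 'a blinop) filter"
  where "uniformity_blinop = (INF e\<in>{0 <..}. principal {(x, y). dist x y < e})"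
definition open_blinop :: "'a blinop set \<Rightarrow> bool"
  where "open_blinop S = (\<forall>x\<in>S. \<forall>\<^sub>F (x', y) in uniformity. x' = x \<longrightarrow> y \<in> S)"
definition sgn_blinop :: "'a blinop \<Rightarrow> 'a blinop"
  where "sgn_blinop x = scaleR (inverse (norm x)) x"
instance
  by standard
    (unfold dist_blinop_def open_blinop_def sgn_blinop_def uniformity_blinop_def,
     (rule refl | (transfer, force simp: algebra_simps norm_triangle_ineq))+)
end

instantiation blinop :: ("{real_normed_vector,perfect_space}") real_normed_algebra_1
begin
lift_definition times_blinop :: "'a blinop \<Rightarrow> 'a blinop \<Rightarrow> 'a blinop" is blinfun_compose .
lift_definition one_blinop :: "'a blinop" is id_blinfun .
instance
proof
  fix a b c :: "'a blinop" and r :: real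
  show "a * b * c = a * (b * c)" "1 * a = a" "a * 1 = a"
    by (transfer, auto intro: blinfun_eqI)+
  show "(a + b) * c = a * c + b * c" "a * (b + c) = a * b + a * c"
    "r *\<^sub>R a * b = r *\<^sub>R (a * b)" "a * r *\<^sub>R b = r *\<^sub>R (a * b)"
    by (transfer, auto intro: blinfun_eqI simp: blinfun.bilinear_simps)+
  show "norm (1::'a blinop) = 1" by transfer simp
  then show "(0::'a blinop) \<noteq> 1" by (metis norm_zero zero_neq_one)
  show "norm (a * b) \<le> norm a * norm b" by transfer (rule norm_blinfun_compose)
qed
end

lemma dist_blinop_rep: "dist a b = dist (blinop_rep a) (blinop_rep b)"
  unfolding dist_blinop_def dist_norm by transfer simp

instance blinop :: (banach) banach
proof
  fix X :: "nat \<Rightarrow> 'a blinop"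
  assume "Cauchy X"
  then have "Cauchy (\<lambda>n. blinop_rep (X n))" unfolding Cauchy_def dist_blinop_rep .
  then obtain L where "(\<lambda>n. blinop_rep (X n)) \<longlonglongrightarrow> L"
    using Cauchy_convergent_iff convergent_def by blast
  then have "X \<longlonglongrightarrow> Blinop L" unfolding LIMSEQ_def dist_blinop_rep by (simp add: Blinop_inverse)
  then show "convergent X" unfolding convergent_def by blast
qed

definition blinop_apply :: "'a::real_normed_vector blinop \<Rightarrow> 'a \<Rightarrow> 'a" where
  "blinop_apply B = blinfun_apply (blinop_rep B)"

lemma blinop_eqI: "(\<And>x. blinop_apply A x = blinop_apply B x) \<Longrightarrow> A = B"
  unfolding blinop_apply_def by (metis blinfun_eqI blinop_rep_inject)

lemma blinop_apply_mult [simp]: "blinop_apply (A * B) x = blinop_apply A (blinop_apply B x)"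
  unfolding blinop_apply_def by (simp add: times_blinop.rep_eq)

lemma blinop_apply_one [simp]: "blinop_apply 1 x = x"
  unfolding blinop_apply_def by (simp add: one_blinop.rep_eq)

lemma bounded_linear_blinop_apply_left: "bounded_linear (\<lambda>B. blinop_apply B x)"
proof -
  have "bounded_linear blinop_rep"
    by (rule bounded_linear_intro[where K=1])
      (simp_all add: plus_blinop.rep_eq scaleR_blinop.rep_eq norm_blinop.rep_eq)
  then show ?thesis
    unfolding blinop_apply_def using blinfun.bounded_linear_left bounded_linear_compose by blast
qed

lemma linear_blinop_apply: "linear (blinop_apply B)"
  unfolding blinop_apply_def by (rule bounded_linear.linear[OF blinfun.bounded_linear_right])

lemma blinop_apply_add_left: "blinop_apply (A + B) x = blinop_apply A x + blinop_apply B x"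
  using real_vector.linear_add[OF bounded_linear.linear[OF bounded_linear_blinop_apply_left]] .

lemma blinop_apply_scaleR_left: "blinop_apply (r *\<^sub>R B) x = r *\<^sub>R blinop_apply B x"
  using real_vector.linear_scale[OF bounded_linear.linear[OF bounded_linear_blinop_apply_left]] .

lemma bounded_linear_vec_lambda:
  fixes g :: "'a::real_normed_vector \<Rightarrow> 'b::real_normed_vector^'n"
  assumes "\<And>i. bounded_linear (\<lambda>x. g x $ i)"
  shows "bounded_linear g"
proof -
  obtain K where K: "\<And>i x. norm (g x $ i) \<le> norm x * K i"
    using bounded_linear.bounded[OF assms] by metis
  show ?thesis
  proof (rule bounded_linear_intro[where K="sum K UNIV"])
    fix x y r
    show "g (x + y) = g x + g y" "g (r *\<^sub>R x) = r *\<^sub>R g x"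
      using real_vector.linear_add[OF bounded_linear.linear[OF assms]]
        real_vector.linear_scale[OF bounded_linear.linear[OF assms]]
      by (simp_all add: vec_eq_iff)
    have "norm (g x) \<le> (\<Sum>i\<in>UNIV. norm (g x $ i))"
      unfolding norm_vec_def by (rule L2_set_le_sum) simp
    also have "\<dots> \<le> (\<Sum>i\<in>UNIV. norm x * K i)" by (rule sum_mono) (rule K)
    finally show "norm (g x) \<le> norm x * sum K UNIV" by (simp add: sum_distrib_left)
  qed
qed

definition blinop_of_matrix :: "real^'n^'n \<Rightarrow> (real^'n) blinop" where
  "blinop_of_matrix q = Blinop (Blinfun (\<lambda>x. q *v x))"

definition matrix_of_blinop :: "(real^'n) blinop \<Rightarrow> real^'n^'n" where
  "matrix_of_blinop B = matrix (blinop_apply B)"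

lemma blinop_apply_of_matrix [simp]: "blinop_apply (blinop_of_matrix q) x = q *v x"
  unfolding blinop_apply_def blinop_of_matrix_def
  by (simp add: Blinop_inverse bounded_linear_Blinfun_apply)

lemma matrix_of_blinop_of_matrix [simp]: "matrix_of_blinop (blinop_of_matrix q) = q"
proof -
  have "blinop_apply (blinop_of_matrix q) = (*v) q" by (rule ext) simp
  then show ?thesis unfolding matrix_of_blinop_def by simp
qed

lemma bounded_linear_matrix_of_blinop: "bounded_linear matrix_of_blinop"
  unfolding matrix_of_blinop_def matrix_def
  by (intro bounded_linear_vec_lambda)
    (simp add: bounded_linear_compose[OF bounded_linear_vec_nth bounded_linear_blinop_apply_left])

lemma blinop_of_matrix_mult: "blinop_of_matrix (A ** B) = blinop_of_matrix A * blinop_of_matrix B"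
  and blinop_of_matrix_one: "blinop_of_matrix (mat 1) = 1"
  and blinop_of_matrix_add: "blinop_of_matrix (A + B) = blinop_of_matrix A + blinop_of_matrix B"
  and blinop_of_matrix_scaleR_one: "blinop_of_matrix (c *\<^sub>R mat 1) = c *\<^sub>R 1"
  by (rule blinop_eqI, simp add: matrix_vector_mul_assoc blinop_apply_add_left blinop_apply_scaleR_left
      matrix_vector_mult_add_rdistrib flip: scaleR_matrix_vector_assoc)+

lemma blinop_of_matpow: "blinop_of_matrix (matpow q k) = blinop_of_matrix q ^ k"
  by (induction k) (simp_all add: blinop_of_matrix_one blinop_of_matrix_mult)

section \<open>The matrix exponential\<close>

lemma mexp_eq_exp: "mexp s q = matrix_of_blinop (exp (s *\<^sub>R blinop_of_matrix q))"
proof -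
  have "(\<lambda>n. matrix_of_blinop ((s *\<^sub>R blinop_of_matrix q) ^ n /\<^sub>R fact n))
          sums matrix_of_blinop (exp (s *\<^sub>R blinop_of_matrix q))"
    by (rule bounded_linear.sums[OF bounded_linear_matrix_of_blinop exp_converges])
  moreover have "matrix_of_blinop ((s *\<^sub>R blinop_of_matrix q) ^ n /\<^sub>R fact n)
                   = (s ^ n / fact n) *\<^sub>R matpow q n" for n
    by (simp add: divide_inverse_commute
        real_vector.linear_scale[OF bounded_linear.linear[OF bounded_linear_matrix_of_blinop]]
        flip: blinop_of_matpow)
  ultimately show ?thesis
    unfolding mexp_def by (simp add: sums_iff)
qed

lemma mexp_apply: "mexp s q *v u = blinop_apply (exp (s *\<^sub>R blinop_of_matrix q)) u"
  unfolding mexp_eq_exp matrix_of_blinop_def using matrix_vector_mul(2)[OF linear_blinop_apply] by metis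

lemma mexp_zero_apply [simp]: "mexp 0 q *v u = u"
  by (simp add: mexp_apply)

lemma mexp_add_apply: "mexp (s + t) q *v u = mexp s q *v (mexp t q *v u)"
proof -
  have "exp ((s + t) *\<^sub>R blinop_of_matrix q) = exp (s *\<^sub>R blinop_of_matrix q) * exp (t *\<^sub>R blinop_of_matrix q)"
    by (simp add: scaleR_add_left exp_add_commuting)
  then show ?thesis by (simp add: mexp_apply)
qed

lemma mexp_apply_has_vector_derivative:
  "((\<lambda>s. mexp s q *v u) has_vector_derivative mexp s q *v (q *v u)) (at s within X)"
proof -
  let ?A = "blinop_of_matrix q"
  have "((\<lambda>s. exp (s *\<^sub>R ?A)) has_derivative (\<lambda>h. h *\<^sub>R (exp (s *\<^sub>R ?A) * ?A))) (at s within X)"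
    using exp_scaleR_has_vector_derivative_right unfolding has_vector_derivative_def .
  from bounded_linear.has_derivative[OF bounded_linear_blinop_apply_left this]
  show ?thesis
    unfolding has_vector_derivative_def mexp_apply by (simp add: blinop_apply_scaleR_left)
qed

lemma continuous_on_mexp_apply: "continuous_on X (\<lambda>s. mexp s q *v u)"
  by (rule continuous_on_vector_derivative) (rule mexp_apply_has_vector_derivative)

lemma mexp_apply_integrable: "(\<lambda>s. mexp s q *v u) integrable_on {a..b}"
  by (rule integrable_continuous_interval) (rule continuous_on_mexp_apply)

lemma mexp_apply_has_integral:
  "0 \<le> t \<Longrightarrow> ((\<lambda>s. mexp s q *v (q *v u)) has_integral mexp t q *v u - u) {0..t}"
  using fundamental_theorem_of_calculus[of 0 t "\<lambda>s. mexp s q *v u", OF _ mexp_apply_has_vector_derivative]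
  by simp

lemma mexp_apply_sums: "(\<lambda>n. (s ^ n / fact n) *\<^sub>R (matpow q n *v x)) sums (mexp s q *v x)"
proof -
  have "(\<lambda>n. (s *\<^sub>R blinop_of_matrix q) ^ n /\<^sub>R fact n) sums exp (s *\<^sub>R blinop_of_matrix q)"
    by (rule exp_converges)
  from bounded_linear.sums[OF bounded_linear_blinop_apply_left this, of x]
  show ?thesis
    by (simp add: mexp_apply blinop_apply_scaleR_left divide_inverse_commute flip: blinop_of_matpow)
qed

lemma mexp_add_diagonal_apply:
  "mexp s (q + c *\<^sub>R mat 1) *v x = exp (s * c) *\<^sub>R (mexp s q *v x)"
proof -
  let ?A = "blinop_of_matrix q"
  have "exp (s *\<^sub>R blinop_of_matrix (q + c *\<^sub>R mat 1)) = exp (s *\<^sub>R ?A + of_real (s * c))"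
    by (simp add: blinop_of_matrix_add blinop_of_matrix_scaleR_one scaleR_add_right of_real_def)
  also have "\<dots> = exp (s *\<^sub>R ?A) * exp (of_real (s * c))"
    by (rule exp_add_commuting) (simp add: of_real_def)
  also have "\<dots> = exp (s *\<^sub>R ?A) * of_real (exp (s * c))"
    by (simp only: exp_of_real)
  also have "\<dots> = exp (s *\<^sub>R ?A) * (exp (s * c) *\<^sub>R 1)"
    by (simp only: of_real_def)
  finally show ?thesis by (simp add: mexp_apply blinop_apply_scaleR_left)
qed

lemma matpow_nonneg: "(\<And>i j. 0 \<le> A $ i $ j) \<Longrightarrow> 0 \<le> matpow A k $ i $ j"
  by (induction k arbitrary: i j) (simp_all add: mat_def matrix_matrix_mult_def sum_nonneg)

text \<open>A matrix with nonnegative off-diagonal entries becomes entrywise nonnegative after adding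
  a large multiple of the identity, which only rescales its exponential.\<close>

lemma mexp_apply_nonneg:
  assumes q: "\<And>i j. i \<noteq> j \<Longrightarrow> 0 \<le> q $ i $ j" and s: "0 \<le> s" and x: "0 \<le> x"
  shows "0 \<le> mexp s q *v x"
proof -
  define c where "c = (\<Sum>i\<in>UNIV. \<bar>q $ i $ i\<bar>)"
  define q' where "q' = q + c *\<^sub>R mat 1"
  have diag: "- q $ i $ i \<le> c" for i
    unfolding c_def by (rule order_trans[OF abs_ge_minus_self member_le_sum[of i UNIV "\<lambda>i. \<bar>q $ i $ i\<bar>"]]) auto
  have "0 \<le> q' $ i $ j" for i j
  proof (cases "i = j")
    case True
    then show ?thesis using diag[of i] by (simp add: q'_def mat_def)
  next
    case False
    then show ?thesis using q[OF False] by (simp add: q'_def mat_def)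
  qed
  then have "0 \<le> matpow q' n $ i $ j" for n i j by (rule matpow_nonneg)
  then have "0 \<le> ((s ^ n / fact n) *\<^sub>R (matpow q' n *v x)) $ i" for n i
    using x s by (simp add: matrix_vector_mult_def less_eq_vec_def sum_nonneg)
  then have "0 \<le> (mexp s q' *v x) $ i" for i
    using sums_le[OF _ sums_zero bounded_linear.sums[OF bounded_linear_vec_nth mexp_apply_sums]]
    by blast
  then show ?thesis
    unfolding q'_def mexp_add_diagonal_apply by (simp add: less_eq_vec_def zero_le_mult_iff)
qed

lemma mexp_apply_mono:
  assumes "\<And>i j. i \<noteq> j \<Longrightarrow> 0 \<le> q $ i $ j" "0 \<le> s" "x \<le> y"
  shows "mexp s q *v x \<le> mexp s q *v y"
  using mexp_apply_nonneg[OF assms(1,2), of "y - x"] assms(3)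
  by (simp add: matrix_vector_mult_diff_distrib)

lemma Qmatrix_offdiag_nonneg: "is_Qmatrix q \<Longrightarrow> i \<noteq> j \<Longrightarrow> 0 \<le> q $ i $ j"
  unfolding is_Qmatrix_def by blast

lemma Qmatrix_mult_vec: "is_Qmatrix q \<Longrightarrow> q *v vec c = 0"
  unfolding is_Qmatrix_def
  by (simp add: vec_eq_iff matrix_vector_mult_def flip: sum_distrib_right)

lemma mexp_Qmatrix_vec: "is_Qmatrix q \<Longrightarrow> 0 \<le> t \<Longrightarrow> mexp t q *v vec c = vec c"
  using mexp_apply_has_integral[of t q "vec c"] by (simp add: Qmatrix_mult_vec)

lemma mexp_Qmatrix_add_vec:
  "is_Qmatrix q \<Longrightarrow> 0 \<le> t \<Longrightarrow> mexp t q *v (x + vec c) = mexp t q *v x + vec c"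
  by (simp add: matrix_vector_right_distrib mexp_Qmatrix_vec)

lemma mexp_Qmatrix_infnorm_le:
  assumes "is_Qmatrix q" "0 \<le> t"
  shows "infnorm (mexp t q *v x) \<le> infnorm x"
proof -
  let ?c = "infnorm x"
  have "vec (- ?c) \<le> x" "x \<le> vec ?c"
    using component_le_infnorm_cart[of x] unfolding less_eq_vec_def abs_le_iff
    by (simp_all add: minus_le_iff)
  then have "vec (- ?c) \<le> mexp t q *v x" "mexp t q *v x \<le> vec ?c"
    using mexp_apply_mono[OF Qmatrix_offdiag_nonneg] mexp_Qmatrix_vec assms by metis+
  then show ?thesis
    unfolding infnorm_le_cart less_eq_vec_def abs_le_iff by (simp add: minus_le_iff)
qed

lemma mexp_Qmatrix_drift:
  assumes q: "is_Qmatrix q" and h: "0 \<le> h"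
  shows "infnorm (mexp h q *v v - v) \<le> h * infnorm (q *v v)"
  unfolding infnorm_le_cart
proof
  fix i
  have "((\<lambda>s. (mexp s q *v (q *v v)) $ i) has_integral (mexp h q *v v - v) $ i) {0..h}"
    using has_integral_linear[OF mexp_apply_has_integral[OF h] bounded_linear_vec_nth]
    by (simp add: o_def)
  moreover have "\<bar>(mexp s q *v (q *v v)) $ i\<bar> \<le> infnorm (q *v v)" if "s \<in> {0..h}" for s
    using that component_le_infnorm_cart mexp_Qmatrix_infnorm_le[OF q] order_trans by fastforce
  ultimately show "\<bar>(mexp h q *v v - v) $ i\<bar> \<le> h * infnorm (q *v v)"
    using has_integral_bound[OF infnorm_pos_le[of "q *v v"], of "\<lambda>s. (mexp s q *v (q *v v)) $ i" _ 0 h] h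
    by (simp add: mult.commute)
qed

section \<open>Operator chains along partitions\<close>

definition Echain_set :: "(real \<Rightarrow> real^'n \<Rightarrow> real^'n) \<Rightarrow> real set \<Rightarrow> real^'n \<Rightarrow> real^'n" where
  "Echain_set E \<pi> = Echain E (sorted_list_of_set \<pi>)"

lemma Echain_set_empty [simp]: "Echain_set E {} u = u"
  and Echain_set_singleton [simp]: "Echain_set E {a} u = u"
  unfolding Echain_set_def by simp_all

lemma Echain_set_insert_less:
  assumes "finite A" "A \<noteq> {}" "\<forall>a\<in>A. b < a"
  shows "Echain_set E (insert b A) u = E (Min A - b) (Echain_set E A u)"
proof -
  have "Min (insert b A) = b" using assms by (intro Min_eqI) (auto simp: less_imp_le)
  moreover have "insert b A - {b} = A" using assms(3) by auto
  ultimately have "sorted_list_of_set (insert b A) = b # sorted_list_of_set A"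
    using sorted_list_of_set_nonempty[of "insert b A"] assms(1) by simp
  moreover have "sorted_list_of_set A = Min A # sorted_list_of_set (A - {Min A})"
    using assms(1,2) by (rule sorted_list_of_set_nonempty)
  ultimately show ?thesis
    unfolding Echain_set_def by simp
qed

lemma Echain_translate: "Echain E (map ((+) h) xs) u = Echain E xs u"
  by (induction E xs u rule: Echain.induct) simp_all

lemma Echain_set_translate: "finite \<pi> \<Longrightarrow> Echain_set E ((+) h ` \<pi>) u = Echain_set E \<pi> u"
proof -
  assume "finite \<pi>"
  have "sorted_wrt (<) (map ((+) h) (sorted_list_of_set \<pi>))"
    using strict_sorted_list_of_set[of \<pi>] by (simp add: sorted_wrt_map)
  then have "sorted_list_of_set (set (map ((+) h) (sorted_list_of_set \<pi>)))
      = map ((+) h) (sorted_list_of_set \<pi>)"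
    by (simp only: strict_sorted_iff sorted_list_of_set.idem_if_sorted_distinct)
  then have "sorted_list_of_set ((+) h ` \<pi>) = map ((+) h) (sorted_list_of_set \<pi>)"
    using \<open>finite \<pi>\<close> by simp
  then show ?thesis
    unfolding Echain_set_def by (simp add: Echain_translate)
qed

lemma Echain_set_split:
  assumes "finite \<pi>" "s \<in> \<pi>"
  shows "Echain_set E \<pi> u = Echain_set E (\<pi> \<inter> {..s}) (Echain_set E (\<pi> \<inter> {s..}) u)"
  using assms
proof (induction \<pi> rule: finite_linorder_min_induct)
  case empty
  then show ?case by simp
next
  case (insert b A)
  show ?case
  proof (cases "s = b")
    case True
    then have "insert b A \<inter> {..s} = {b}" "insert b A \<inter> {s..} = insert b A"
      using insert.hyps by auto
    then show ?thesis by simp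
  next
    case False
    then have s: "s \<in> A" "b < s" using insert by auto
    have "Min A \<le> s" using insert.hyps s by simp
    moreover have "Min A \<in> A" using insert.hyps s by (intro Min_in) auto
    ultimately have "Min (A \<inter> {..s}) = Min A"
      using insert.hyps by (intro Min_eqI) auto
    moreover have "A \<noteq> {}" "A \<inter> {..s} \<noteq> {}" using s by auto
    moreover have "insert b A \<inter> {..s} = insert b (A \<inter> {..s})" using s by auto
    ultimately have low: "Echain_set E (insert b A \<inter> {..s}) w
        = E (Min A - b) (Echain_set E (A \<inter> {..s}) w)" for w
      using insert.hyps Echain_set_insert_less[of "A \<inter> {..s}" b E] by simp
    have up: "insert b A \<inter> {s..} = A \<inter> {s..}" using s by auto
    have "Echain_set E (insert b A) u = E (Min A - b) (Echain_set E A u)"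
      using Echain_set_insert_less insert.hyps \<open>A \<noteq> {}\<close> by blast
    also have "\<dots> = E (Min A - b) (Echain_set E (A \<inter> {..s}) (Echain_set E (A \<inter> {s..}) u))"
      using insert.IH s by simp
    also have "\<dots> = Echain_set E (insert b A \<inter> {..s}) (Echain_set E (insert b A \<inter> {s..}) u)"
      using low up by simp
    finally show ?thesis .
  qed
qed

lemma Echain_set_insert_before_min:
  assumes subadd: "\<And>h1 h2 x. 0 < h1 \<Longrightarrow> 0 < h2 \<Longrightarrow> E (h1 + h2) x \<le> E h1 (E h2 x)"
    and A: "finite A" "A \<noteq> {}" and br: "b < r" "r < Min A"
  shows "Echain_set E (insert b A) u \<le> Echain_set E (insert b (insert r A)) u"
proof -
  have "\<forall>a\<in>A. r < a" "\<forall>a\<in>insert r A. b < a" and bA: "\<forall>a\<in>A. b < a"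
    using A br by auto
  then have "Echain_set E (insert b (insert r A)) u = E (r - b) (E (Min A - r) (Echain_set E A u))"
    using A br Echain_set_insert_less[of "insert r A" b E] Echain_set_insert_less[of A r E]
    by (simp add: min_absorb1)
  moreover have "E ((r - b) + (Min A - r)) (Echain_set E A u)
      \<le> E (r - b) (E (Min A - r) (Echain_set E A u))"
    using br by (intro subadd) auto
  ultimately show ?thesis
    using Echain_set_insert_less[OF A bA, of E u] by simp
qed

lemma Echain_set_insert_refines:
  assumes mono: "\<And>h x y. 0 < h \<Longrightarrow> x \<le> y \<Longrightarrow> E h x \<le> E h y"
    and subadd: "\<And>h1 h2 x. 0 < h1 \<Longrightarrow> 0 < h2 \<Longrightarrow> E (h1 + h2) x \<le> E h1 (E h2 x)"
    and "finite \<pi>" "x \<in> \<pi>" "y \<in> \<pi>" "x \<le> r" "r \<le> y"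
  shows "Echain_set E \<pi> u \<le> Echain_set E (insert r \<pi>) u"
  using assms(3-)
proof (induction \<pi> arbitrary: x rule: finite_linorder_min_induct)
  case (insert b A)
  show ?case
  proof (cases "r \<in> insert b A")
    case False
    have "b \<le> x" using insert by auto
    then have br: "b < r" using False \<open>x \<le> r\<close> by auto
    then have "y \<in> A" using insert False by auto
    then have A: "A \<noteq> {}" "Min A \<le> y" using insert.hyps by auto
    then have "Min A \<in> A" using insert.hyps by (intro Min_in)
    show ?thesis
    proof (cases "r < Min A")
      case True
      then show ?thesis
        using Echain_set_insert_before_min[OF subadd insert.hyps(1) A(1) br] by (simp add: insert_commute)
    next
      case False
      then have "Min A \<le> r" by (simp only: not_less)
      then have "Min (insert r A) = Min A"
        using insert.hyps A by (metis Min_insert min_absorb2)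
      moreover have "\<forall>a\<in>insert r A. b < a" using insert.hyps br by auto
      moreover have "Echain_set E A u \<le> Echain_set E (insert r A) u"
        using insert.IH[of "Min A"] A \<open>Min A \<in> A\<close> \<open>y \<in> A\<close> False \<open>r \<le> y\<close> by simp
      moreover have "0 < Min A - b" using insert.hyps \<open>Min A \<in> A\<close> by simp
      ultimately show ?thesis
        using insert.hyps A Echain_set_insert_less[of "insert r A" b E] Echain_set_insert_less[of A b E]
        by (simp add: insert_commute mono)
    qed
  qed (simp add: insert_absorb)
qed simp

lemma Echain_set_refines:
  assumes mono: "\<And>h x y. 0 < h \<Longrightarrow> x \<le> y \<Longrightarrow> E h x \<le> E h y"
    and subadd: "\<And>h1 h2 x. 0 < h1 \<Longrightarrow> 0 < h2 \<Longrightarrow> E (h1 + h2) x \<le> E h1 (E h2 x)"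
    and "finite \<rho>" "\<pi> \<subseteq> \<rho>" "x \<in> \<pi>" "y \<in> \<pi>" "\<rho> \<subseteq> {x..y}"
  shows "Echain_set E \<pi> u \<le> Echain_set E \<rho> u"
proof -
  have "finite \<pi>" using assms(3,4) finite_subset by blast
  have refine: "Echain_set E \<pi> u \<le> Echain_set E (\<pi> \<union> F) u" if "finite F" "F \<subseteq> {x..y}" for F
    using that
  proof (induction F rule: finite_induct)
    case (insert r F)
    then have "Echain_set E (\<pi> \<union> F) u \<le> Echain_set E (insert r (\<pi> \<union> F)) u"
      using \<open>finite \<pi>\<close> assms(5,6)
      by (intro Echain_set_insert_refines[OF mono subadd, of _ x y]) auto
    with insert show ?case by (simp add: order_trans)
  qed simp
  have "finite (\<rho> - \<pi>)" "\<rho> - \<pi> \<subseteq> {x..y}" using assms(3,7) by auto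
  from refine[OF this] show ?thesis using assms(4) by (simp add: Un_absorb1)
qed

lemma Echain_set_nonexpansive:
  assumes "\<And>h w v. 0 < h \<Longrightarrow> infnorm (E h w - E h v) \<le> infnorm (w - v)" "finite \<pi>"
  shows "infnorm (Echain_set E \<pi> w - Echain_set E \<pi> v) \<le> infnorm (w - v)"
  using assms(2)
proof (induction \<pi> rule: finite_linorder_min_induct)
  case (insert b A)
  show ?case
  proof (cases "A = {}")
    case False
    then have "0 < Min A - b" using insert.hyps by auto
    then have "infnorm (E (Min A - b) (Echain_set E A w) - E (Min A - b) (Echain_set E A v))
        \<le> infnorm (w - v)"
      using assms(1) insert.IH order_trans by blast
    then show ?thesis using insert.hyps False by (simp add: Echain_set_insert_less)
  qed simp
qed simp

lemma Echain_set_drift: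
  assumes nonexp: "\<And>h w v. 0 < h \<Longrightarrow> infnorm (E h w - E h v) \<le> infnorm (w - v)"
    and drift: "\<And>h. 0 < h \<Longrightarrow> infnorm (E h v - v) \<le> h * K"
    and "finite \<pi>" "\<pi> \<noteq> {}"
  shows "infnorm (Echain_set E \<pi> v - v) \<le> (Max \<pi> - Min \<pi>) * K"
  using assms(3,4)
proof (induction \<pi> rule: finite_linorder_min_induct)
  case (insert b A)
  show ?case
  proof (cases "A = {}")
    case False
    let ?h = "Min A - b" and ?w = "Echain_set E A v"
    have "Min A \<in> A" "Max A \<in> A" using insert.hyps False by simp_all
    then have h: "0 < ?h" and "b < Max A" and MaxA: "Min A \<le> Max A"
      using insert.hyps by auto
    have "infnorm (E ?h ?w - v) \<le> infnorm (E ?h ?w - E ?h v) + infnorm (E ?h v - v)"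
      using infnorm_triangle[of "E ?h ?w - E ?h v" "E ?h v - v"] by simp
    also have "\<dots> \<le> (Max A - Min A) * K + ?h * K"
      using nonexp[OF h, of ?w v] drift[OF h] insert.IH False by linarith
    moreover have "Max (insert b A) = Max A"
      using insert.hyps \<open>Max A \<in> A\<close> \<open>b < Max A\<close> by (intro Max_eqI) auto
    moreover have "Min (insert b A) = b"
      using insert.hyps by (intro Min_eqI) (auto simp: less_imp_le)
    ultimately show ?thesis
      using insert.hyps False by (simp add: Echain_set_insert_less algebra_simps)
  qed (simp add: infnorm_0)
qed simp

lemma partitionsD:
  assumes "\<pi> \<in> partitions t"
  shows "finite \<pi>" "0 \<in> \<pi>" "t \<in> \<pi>" "\<pi> \<subseteq> {0..t}" "Min \<pi> = 0" "Max \<pi> = t"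
proof -
  show fin: "finite \<pi>" and z: "0 \<in> \<pi>" and m: "Max \<pi> = t"
    using assms unfolding partitions_def by auto
  have nn: "\<pi> \<subseteq> {0..}" using assms unfolding partitions_def by auto
  show "t \<in> \<pi>" using Max_in[OF fin] z m by auto
  show "\<pi> \<subseteq> {0..t}" using nn m fin by auto
  show "Min \<pi> = 0" using fin z nn by (intro Min_eqI) auto
qed

lemma partitionsI:
  assumes "finite \<pi>" "0 \<in> \<pi>" "t \<in> \<pi>" "\<pi> \<subseteq> {0..t}"
  shows "\<pi> \<in> partitions t"
proof -
  have "Max \<pi> = t" using assms by (intro Max_eqI) auto
  then show ?thesis using assms unfolding partitions_def by auto
qed

lemma partitions_nonempty: "0 \<le> t \<Longrightarrow> partitions t \<noteq> {}"
  using partitionsI[of "{0, t}" t] by auto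

lemma Eh_zero: "P \<noteq> {} \<Longrightarrow> Eh P f 0 u = u"
  unfolding Eh_def Sq_def by (simp add: vsup_const)

lemma Epi_eq_Echain_set: "P \<noteq> {} \<Longrightarrow> Epi P f \<pi> = Echain_set (Eh P f) \<pi>"
  by (rule ext) (simp add: Epi_def Echain_set_def Eh_zero)

section \<open>The Nisio semigroup without running cost\<close>

locale Qmatrix_family =
  fixes P :: "(real^'n^'n) set"
  assumes Qmatrix: "\<And>q. q \<in> P \<Longrightarrow> is_Qmatrix q"
    and nonempty: "P \<noteq> {}"
    and bounded_action: "\<And>v. \<exists>K. \<forall>q\<in>P. infnorm (q *v v) \<le> K"
begin

abbreviation E0 :: "real \<Rightarrow> real^'n \<Rightarrow> real^'n" where
  "E0 \<equiv> Eh P (\<lambda>_. 0)"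

abbreviation S0 :: "real \<Rightarrow> real^'n \<Rightarrow> real^'n" where
  "S0 \<equiv> nisio P (\<lambda>_. 0)"

lemma E0_eq: "E0 h v = vsup P (\<lambda>q. mexp h q *v v)"
  unfolding Eh_def Sq_def by simp

lemma mexp_le_E0:
  assumes "q \<in> P" "0 \<le> h"
  shows "mexp h q *v v \<le> E0 h v"
  unfolding E0_eq
proof (rule vsup_upper[OF assms(1)])
  have "(mexp h q' *v v) $ i \<le> infnorm v" if "q' \<in> P" for q' i
    using component_le_infnorm_cart[of "mexp h q' *v v" i]
      mexp_Qmatrix_infnorm_le[OF Qmatrix[OF that] assms(2), of v] by linarith
  then show "bdd_above ((\<lambda>q. (mexp h q *v v) $ i) ` P)" for i
    by (meson bdd_aboveI2)
qed

lemma E0_least: "(\<And>q. q \<in> P \<Longrightarrow> mexp h q *v v \<le> y) \<Longrightarrow> E0 h v \<le> y"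
  unfolding E0_eq by (rule vsup_least[OF nonempty])

lemma E0_mono:
  assumes h: "0 \<le> h" and "x \<le> y"
  shows "E0 h x \<le> E0 h y"
proof (rule E0_least)
  fix q assume q: "q \<in> P"
  have "mexp h q *v x \<le> mexp h q *v y"
    using q h \<open>x \<le> y\<close> by (intro mexp_apply_mono Qmatrix_offdiag_nonneg Qmatrix)
  also have "\<dots> \<le> E0 h y" by (rule mexp_le_E0[OF q h])
  finally show "mexp h q *v x \<le> E0 h y" .
qed

lemma E0_subadditive: "0 \<le> h1 \<Longrightarrow> 0 \<le> h2 \<Longrightarrow> E0 (h1 + h2) x \<le> E0 h1 (E0 h2 x)"
proof (rule E0_least)
  fix q assume q: "q \<in> P" and h: "0 \<le> h1" "0 \<le> h2"
  have "mexp (h1 + h2) q *v x = mexp h1 q *v (mexp h2 q *v x)" by (rule mexp_add_apply)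
  also have "\<dots> \<le> mexp h1 q *v E0 h2 x"
    using q h by (intro mexp_apply_mono mexp_le_E0 Qmatrix_offdiag_nonneg Qmatrix)
  also have "\<dots> \<le> E0 h1 (E0 h2 x)" by (rule mexp_le_E0[OF q h(1)])
  finally show "mexp (h1 + h2) q *v x \<le> E0 h1 (E0 h2 x)" .
qed

lemma E0_le_add_vec: "0 \<le> h \<Longrightarrow> w \<le> v + vec c \<Longrightarrow> E0 h w \<le> E0 h v + vec c"
proof (rule E0_least)
  fix q assume q: "q \<in> P" and h: "0 \<le> h" and wv: "w \<le> v + vec c"
  have "mexp h q *v w \<le> mexp h q *v (v + vec c)"
    using q h wv by (intro mexp_apply_mono Qmatrix_offdiag_nonneg Qmatrix)
  also have "\<dots> = mexp h q *v v + vec c" using Qmatrix[OF q] h by (rule mexp_Qmatrix_add_vec)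
  also have "\<dots> \<le> E0 h v + vec c" using mexp_le_E0[OF q h] by (rule add_right_mono)
  finally show "mexp h q *v w \<le> E0 h v + vec c" .
qed

lemma E0_nonexpansive:
  assumes "0 \<le> h"
  shows "infnorm (E0 h w - E0 h v) \<le> infnorm (w - v)"
proof -
  have "w \<le> v + vec (infnorm (w - v))" "v \<le> w + vec (infnorm (w - v))"
    using infnorm_diff_le_cart[of w v "infnorm (w - v)"] by simp_all
  then show ?thesis
    unfolding infnorm_diff_le_cart using E0_le_add_vec[OF assms] by blast
qed

lemma E0_drift:
  assumes h: "0 \<le> h" and K: "\<And>q. q \<in> P \<Longrightarrow> infnorm (q *v v) \<le> K"
  shows "infnorm (E0 h v - v) \<le> h * K"
proof -
  have drift: "infnorm (mexp h q *v v - v) \<le> h * K" if "q \<in> P" for q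
    using mexp_Qmatrix_drift[OF Qmatrix[OF that] h, of v] mult_left_mono[OF K[OF that] h]
    by linarith
  have "E0 h v \<le> v + vec (h * K)"
    by (rule E0_least) (use drift in \<open>simp add: infnorm_diff_le_cart\<close>)
  moreover have "v \<le> E0 h v + vec (h * K)"
  proof -
    obtain q where q: "q \<in> P" using nonempty by blast
    then have "v \<le> mexp h q *v v + vec (h * K)" using drift by (simp add: infnorm_diff_le_cart)
    also have "\<dots> \<le> E0 h v + vec (h * K)" using mexp_le_E0[OF q h] by (rule add_right_mono)
    finally show ?thesis .
  qed
  ultimately show ?thesis by (simp add: infnorm_diff_le_cart)
qed

lemma action_bound: obtains K where "0 \<le> K" "\<And>q. q \<in> P \<Longrightarrow> infnorm (q *v v) \<le> K"
proof -
  obtain K where "\<forall>q\<in>P. infnorm (q *v v) \<le> K" using bounded_action by blast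
  then show ?thesis by (intro that[of "max K 0"]) auto
qed

lemma Echain_set_E0_nonexpansive:
  "finite \<pi> \<Longrightarrow> infnorm (Echain_set E0 \<pi> w - Echain_set E0 \<pi> v) \<le> infnorm (w - v)"
  by (rule Echain_set_nonexpansive) (auto intro: E0_nonexpansive)

lemma Echain_set_E0_drift:
  "(\<And>q. q \<in> P \<Longrightarrow> infnorm (q *v v) \<le> K) \<Longrightarrow> finite \<pi> \<Longrightarrow> \<pi> \<noteq> {}
    \<Longrightarrow> infnorm (Echain_set E0 \<pi> v - v) \<le> (Max \<pi> - Min \<pi>) * K"
  by (rule Echain_set_drift) (auto intro: E0_nonexpansive E0_drift)

lemma Echain_set_E0_refines:
  "finite \<rho> \<Longrightarrow> \<pi> \<subseteq> \<rho> \<Longrightarrow> x \<in> \<pi> \<Longrightarrow> y \<in> \<pi> \<Longrightarrow> \<rho> \<subseteq> {x..y}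
    \<Longrightarrow> Echain_set E0 \<pi> v \<le> Echain_set E0 \<rho> v"
  by (rule Echain_set_refines) (auto intro: E0_mono E0_subadditive)

lemma S0_eq: "S0 t v = vsup (partitions t) (\<lambda>\<pi>. Echain_set E0 \<pi> v)"
  unfolding nisio_def Epi_eq_Echain_set[OF nonempty] ..

lemma S0_bdd_above: "bdd_above ((\<lambda>\<pi>. Echain_set E0 \<pi> v $ i) ` partitions t)"
proof -
  obtain K where K: "0 \<le> K" "\<And>q. q \<in> P \<Longrightarrow> infnorm (q *v v) \<le> K" using action_bound[of v] by blast
  have "Echain_set E0 \<pi> v $ i \<le> v $ i + t * K" if "\<pi> \<in> partitions t" for \<pi>
  proof -
    note \<pi> = partitionsD[OF that]
    have "\<bar>(Echain_set E0 \<pi> v - v) $ i\<bar> \<le> (Max \<pi> - Min \<pi>) * K"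
      using Echain_set_E0_drift[OF K(2) \<pi>(1)] \<pi>(2) component_le_infnorm_cart order_trans
      by blast
    then show ?thesis using \<pi> by simp
  qed
  then show ?thesis by (meson bdd_aboveI2)
qed

lemma Echain_set_le_S0: "\<pi> \<in> partitions t \<Longrightarrow> Echain_set E0 \<pi> v \<le> S0 t v"
  unfolding S0_eq by (rule vsup_upper) (auto intro: S0_bdd_above)

lemma S0_least:
  "0 \<le> t \<Longrightarrow> (\<And>\<pi>. \<pi> \<in> partitions t \<Longrightarrow> Echain_set E0 \<pi> v \<le> y) \<Longrightarrow> S0 t v \<le> y"
  unfolding S0_eq by (rule vsup_least[OF partitions_nonempty])

lemma E0_le_S0:
  assumes "0 \<le> s"
  shows "E0 s v \<le> S0 s v"
proof -
  have "Echain_set E0 {0, s} v = E0 s v"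
    using assms Echain_set_insert_less[of "{s}" 0 E0 v] by (cases "s = 0") (simp_all add: Eh_zero nonempty)
  moreover have "{0, s} \<in> partitions s" using assms by (intro partitionsI) auto
  ultimately show ?thesis using Echain_set_le_S0 by metis
qed


lemma S0_le_later:
  assumes K: "\<And>q. q \<in> P \<Longrightarrow> infnorm (q *v v) \<le> K" and st: "0 \<le> s" "s \<le> t"
  shows "S0 s v \<le> S0 t v + vec ((t - s) * K)"
proof (rule S0_least[OF st(1)])
  fix \<pi> assume \<pi>: "\<pi> \<in> partitions s"
  note \<pi>D = partitionsD[OF \<pi>]
  let ?\<pi>' = "insert t \<pi>"
  have \<pi>': "?\<pi>' \<in> partitions t" using \<pi>D(1-4) st by (intro partitionsI) auto
  have "?\<pi>' \<inter> {..s} = \<pi>" "?\<pi>' \<inter> {s..} = {s, t}" using \<pi>D(1-4) st by auto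
  then have "Echain_set E0 ?\<pi>' v = Echain_set E0 \<pi> (Echain_set E0 {s, t} v)"
    using Echain_set_split[of ?\<pi>' s] \<pi>D by simp
  moreover have "infnorm (Echain_set E0 {s, t} v - v) \<le> (t - s) * K"
    using Echain_set_E0_drift[OF K, of "{s, t}"] st by (simp add: max_def min_def)
  moreover have "infnorm (Echain_set E0 \<pi> (Echain_set E0 {s, t} v) - Echain_set E0 \<pi> v)
      \<le> infnorm (Echain_set E0 {s, t} v - v)"
    using \<pi>D(1) by (rule Echain_set_E0_nonexpansive)
  ultimately have "infnorm (Echain_set E0 ?\<pi>' v - Echain_set E0 \<pi> v) \<le> (t - s) * K"
    by simp
  then have "Echain_set E0 \<pi> v \<le> Echain_set E0 ?\<pi>' v + vec ((t - s) * K)"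
    by (simp add: infnorm_diff_le_cart)
  also have "\<dots> \<le> S0 t v + vec ((t - s) * K)"
    using Echain_set_le_S0[OF \<pi>'] by (rule add_right_mono)
  finally show "Echain_set E0 \<pi> v \<le> S0 t v + vec ((t - s) * K)" .
qed

lemma S0_le_earlier:
  assumes K: "\<And>q. q \<in> P \<Longrightarrow> infnorm (q *v v) \<le> K" and st: "0 \<le> s" "s \<le> t"
  shows "S0 t v \<le> S0 s v + vec ((t - s) * K)"
proof (rule S0_least)
  show "0 \<le> t" using st by simp
  fix \<pi> assume \<pi>: "\<pi> \<in> partitions t"
  note \<pi>D = partitionsD[OF \<pi>]
  let ?\<pi>' = "insert s \<pi>"
  let ?lo = "?\<pi>' \<inter> {..s}" and ?hi = "?\<pi>' \<inter> {s..}"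
  have fin: "finite ?\<pi>'" "s \<in> ?\<pi>'" using \<pi>D by auto
  have "Max ?hi = t" "Min ?hi = s"
    using \<pi>D(1-4) st by (auto intro!: Max_eqI Min_eqI)
  then have "infnorm (Echain_set E0 ?hi v - v) \<le> (t - s) * K"
    using Echain_set_E0_drift[OF K, of ?hi] fin by auto
  moreover have "infnorm (Echain_set E0 ?lo (Echain_set E0 ?hi v) - Echain_set E0 ?lo v)
      \<le> infnorm (Echain_set E0 ?hi v - v)"
    using fin by (intro Echain_set_E0_nonexpansive) simp
  ultimately have "infnorm (Echain_set E0 ?lo (Echain_set E0 ?hi v) - Echain_set E0 ?lo v)
      \<le> (t - s) * K"
    by linarith
  then have "Echain_set E0 ?lo (Echain_set E0 ?hi v) \<le> Echain_set E0 ?lo v + vec ((t - s) * K)"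
    by (simp add: infnorm_diff_le_cart)
  have "Echain_set E0 \<pi> v \<le> Echain_set E0 ?\<pi>' v"
    using \<pi>D(1-4) st by (intro Echain_set_E0_refines[of _ _ 0 t]) auto
  also have "\<dots> = Echain_set E0 ?lo (Echain_set E0 ?hi v)"
    using fin by (rule Echain_set_split)
  also have "\<dots> \<le> Echain_set E0 ?lo v + vec ((t - s) * K)" by fact
  also have "\<dots> \<le> S0 s v + vec ((t - s) * K)"
    using \<pi>D(1-4) st by (intro add_right_mono Echain_set_le_S0 partitionsI) auto
  finally show "Echain_set E0 \<pi> v \<le> S0 s v + vec ((t - s) * K)" .
qed

lemma S0_lipschitz:
  assumes "\<And>q. q \<in> P \<Longrightarrow> infnorm (q *v v) \<le> K" "0 \<le> s" "s \<le> t"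
  shows "infnorm (S0 t v - S0 s v) \<le> (t - s) * K"
  using S0_le_later[OF assms] S0_le_earlier[OF assms] by (simp add: infnorm_diff_le_cart)

lemma continuous_on_S0: "continuous_on {0..} (\<lambda>s. S0 s v)"
proof -
  obtain K where K: "0 \<le> K" "\<And>q. q \<in> P \<Longrightarrow> infnorm (q *v v) \<le> K"
    using action_bound[of v] by blast
  let ?L = "sqrt DIM(real^'n) * K"
  have le: "dist (S0 x v) (S0 y v) \<le> ?L * dist x y" if "0 \<le> y" "y \<le> x" for x y
  proof -
    have "norm (S0 x v - S0 y v) \<le> sqrt DIM(real^'n) * infnorm (S0 x v - S0 y v)"
      by (rule norm_le_infnorm)
    also have "\<dots> \<le> sqrt DIM(real^'n) * ((x - y) * K)"
      using S0_lipschitz[OF K(2) that] by (simp add: mult_left_mono)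
    finally show ?thesis using that by (simp add: dist_norm dist_real_def mult_ac)
  qed
  have "?L-lipschitz_on {0..} (\<lambda>s. S0 s v)"
  proof (rule lipschitz_onI)
    fix x y :: real assume "x \<in> {0..}" "y \<in> {0..}"
    then show "dist (S0 x v) (S0 y v) \<le> ?L * dist x y"
      using le[of y x] le[of x y] by (cases "y \<le> x") (auto simp: dist_commute)
  qed (use K in simp)
  then show ?thesis by (rule lipschitz_on_continuous_on)
qed


text \<open>Finitely many partitions have a common refinement, so one partition approximates
  all components of the supremum simultaneously.\<close>

lemma S0_approx:
  assumes s: "0 \<le> s" and e: "0 < e"
  obtains \<pi> where "\<pi> \<in> partitions s" "S0 s v \<le> Echain_set E0 \<pi> v + vec e"
proof -
  have "\<exists>\<pi>\<in>partitions s. S0 s v $ j - e < Echain_set E0 \<pi> v $ j" for j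
  proof -
    have "S0 s v $ j - e < (SUP \<pi>\<in>partitions s. Echain_set E0 \<pi> v $ j)"
      using e unfolding S0_eq vsup_nth by simp
    then show ?thesis using less_cSUP_iff[OF partitions_nonempty[OF s] S0_bdd_above] by blast
  qed
  then obtain g where g: "\<And>j. g j \<in> partitions s" "\<And>j. S0 s v $ j - e < Echain_set E0 (g j) v $ j"
    by metis
  define \<pi> where "\<pi> = (\<Union>j. g j)"
  have gD: "finite (g j)" "0 \<in> g j" "s \<in> g j" "g j \<subseteq> {0..s}" for j
    using partitionsD[OF g(1)] by auto
  have "finite \<pi>" unfolding \<pi>_def using gD(1) by simp
  have "\<pi> \<subseteq> {0..s}" unfolding \<pi>_def using gD(4) by blast
  then have \<pi>: "\<pi> \<in> partitions s" unfolding \<pi>_def using gD by (intro partitionsI) auto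
  have "Echain_set E0 (g j) v \<le> Echain_set E0 \<pi> v" for j
    using \<open>finite \<pi>\<close> \<open>\<pi> \<subseteq> {0..s}\<close> gD
    by (intro Echain_set_E0_refines[of _ _ 0 s]) (auto simp: \<pi>_def)
  then have "S0 s v \<le> Echain_set E0 \<pi> v + vec e"
    using g(2) unfolding less_eq_vec_def by (smt (verit) vec_component vector_add_component)
  with \<pi> show ?thesis by (rule that)
qed

lemma Echain_set_E0_translate:
  assumes "finite \<pi>" "\<pi> \<noteq> {}" "Min \<pi> = 0" "0 < h"
  shows "Echain_set E0 (insert 0 ((+) h ` \<pi>)) v = E0 h (Echain_set E0 \<pi> v)"
proof -
  have "Min ((+) h ` \<pi>) = h"
    using mono_Min_commute[of "(+) h" \<pi>] assms by (simp add: mono_def)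
  moreover have "\<forall>a\<in>(+) h ` \<pi>. 0 < a"
    using assms Min_le[OF assms(1)] by fastforce
  ultimately have "Echain_set E0 (insert 0 ((+) h ` \<pi>)) v = E0 h (Echain_set E0 ((+) h ` \<pi>) v)"
    using Echain_set_insert_less[of "(+) h ` \<pi>" 0 E0 v] assms by simp
  also have "\<dots> = E0 h (Echain_set E0 \<pi> v)"
    by (simp only: Echain_set_translate[OF assms(1)])
  finally show ?thesis .
qed

lemma mexp_S0_le:
  assumes q: "q \<in> P" and h: "0 \<le> h" and s: "0 \<le> s"
  shows "mexp h q *v S0 s v \<le> S0 (h + s) v"
proof (cases "h = 0")
  case True
  then show ?thesis by simp
next
  case False
  then have "0 < h" using h by simp
  show ?thesis
  proof (rule vec_le_epsilon)
    fix e :: real assume "0 < e"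
    obtain \<pi> where \<pi>: "\<pi> \<in> partitions s" and approx: "S0 s v \<le> Echain_set E0 \<pi> v + vec e"
      using S0_approx[OF s \<open>0 < e\<close>] by blast
    note \<pi>D = partitionsD[OF \<pi>]
    have "insert 0 ((+) h ` \<pi>) \<in> partitions (h + s)"
      using \<pi>D(1-4) h by (intro partitionsI) auto
    then have "E0 h (Echain_set E0 \<pi> v) \<le> S0 (h + s) v"
      using Echain_set_le_S0 Echain_set_E0_translate[OF \<pi>D(1) _ \<pi>D(5) \<open>0 < h\<close>] \<pi>D(2) by fastforce
    have "mexp h q *v S0 s v \<le> mexp h q *v (Echain_set E0 \<pi> v + vec e)"
      using q h approx by (intro mexp_apply_mono Qmatrix_offdiag_nonneg Qmatrix)
    also have "\<dots> = mexp h q *v Echain_set E0 \<pi> v + vec e"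
      using Qmatrix[OF q] h by (rule mexp_Qmatrix_add_vec)
    also have "\<dots> \<le> E0 h (Echain_set E0 \<pi> v) + vec e"
      using mexp_le_E0[OF q h] by (rule add_right_mono)
    also have "\<dots> \<le> S0 (h + s) v + vec e"
      by (rule add_right_mono) fact
    finally show "mexp h q *v S0 s v \<le> S0 (h + s) v + vec e" .
  qed
qed

lemma S0_integrable: "0 \<le> a \<Longrightarrow> (\<lambda>s. S0 s v) integrable_on {a..b}"
  by (intro integrable_continuous_interval continuous_on_subset[OF continuous_on_S0]) auto

lemma integral_S0_add:
  assumes "0 \<le> h" "0 \<le> r"
  shows "integral {0..h + r} (\<lambda>s. S0 s v)
    = integral {0..h} (\<lambda>s. S0 s v) + integral {0..r} (\<lambda>s. S0 (h + s) v)"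
proof -
  have "integral {0..h} (\<lambda>s. S0 s v) + integral {h..h + r} (\<lambda>s. S0 s v)
      = integral {0..h + r} (\<lambda>s. S0 s v)"
    using assms by (intro Henstock_Kurzweil_Integration.integral_combine S0_integrable) auto
  moreover have "integral {h..h + r} (\<lambda>s. S0 s v) = integral {0..r} (\<lambda>s. S0 (h + s) v)"
    using integral_shift_Icc_real[of 0 r "\<lambda>s. S0 s v" h] by (simp add: o_def add.commute)
  ultimately show ?thesis by simp
qed


end

section \<open>The Nisio semigroup with running cost\<close>

locale controlled_Qmatrix_family = Qmatrix_family P for P :: "(real^'n^'n) set" +
  fixes f :: "real^'n^'n \<Rightarrow> real^'n"
  assumes Qop_bdd: "\<And>u i. bdd_above ((\<lambda>q. (q *v u + f q) $ i) ` P)"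
begin

lemma le_Qop: "q \<in> P \<Longrightarrow> q *v u + f q \<le> Qop P f u"
  unfolding Qop_def by (rule vsup_upper) (use Qop_bdd in auto)

lemma Sq_sub_le:
  assumes q: "q \<in> P" and h: "0 \<le> h"
  shows "Sq f q h u - u \<le> integral {0..h} (\<lambda>s. S0 s (Qop P f u))"
proof -
  have "integral {0..h} (\<lambda>s. mexp s q *v (q *v u + f q))
      = (mexp h q *v u - u) + integral {0..h} (\<lambda>s. mexp s q *v f q)"
    using integral_unique[OF mexp_apply_has_integral[OF h, of q u]]
    by (simp add: matrix_vector_right_distrib integral_add mexp_apply_integrable)
  then have "Sq f q h u - u = integral {0..h} (\<lambda>s. mexp s q *v (q *v u + f q))"
    by (simp add: Sq_def algebra_simps)
  also have "\<dots> \<le> integral {0..h} (\<lambda>s. S0 s (Qop P f u))"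
  proof (rule integral_le_cart[OF mexp_apply_integrable S0_integrable])
    fix s assume "s \<in> {0..h}"
    then have s: "0 \<le> s" by simp
    have "mexp s q *v (q *v u + f q) \<le> mexp s q *v Qop P f u"
      using q s le_Qop[OF q] by (intro mexp_apply_mono Qmatrix_offdiag_nonneg Qmatrix)
    also have "\<dots> \<le> E0 s (Qop P f u)" by (rule mexp_le_E0[OF q s])
    also have "\<dots> \<le> S0 s (Qop P f u)" by (rule E0_le_S0[OF s])
    finally show "mexp s q *v (q *v u + f q) \<le> S0 s (Qop P f u)" .
  qed simp
  finally show ?thesis .
qed

text \<open>One more step of length h shifts the accumulated integral by h, because
  e^{hq} S0(s) <= S0(h + s).\<close>

lemma Sq_sub_le_step:
  assumes q: "q \<in> P" and h: "0 \<le> h" and r: "0 \<le> r"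
    and w: "w - u \<le> integral {0..r} (\<lambda>s. S0 s (Qop P f u))"
  shows "Sq f q h w - u \<le> integral {0..h + r} (\<lambda>s. S0 s (Qop P f u))"
proof -
  let ?v = "Qop P f u"
  have S0_int: "(\<lambda>s. S0 s ?v) integrable_on {0..r}" by (rule S0_integrable) simp
  have "mexp h q *v (w - u) \<le> mexp h q *v integral {0..r} (\<lambda>s. S0 s ?v)"
    using q h w by (intro mexp_apply_mono Qmatrix_offdiag_nonneg Qmatrix)
  also have "\<dots> = integral {0..r} (\<lambda>s. mexp h q *v S0 s ?v)"
    by (rule integral_linear[OF S0_int matrix_vector_mul_bounded_linear, unfolded o_def, symmetric])
  also have "\<dots> \<le> integral {0..r} (\<lambda>s. S0 (h + s) ?v)"
  proof (rule integral_le_cart)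
    show "(\<lambda>s. mexp h q *v S0 s ?v) integrable_on {0..r}"
      using integrable_linear[OF S0_int matrix_vector_mul_bounded_linear] by (simp add: o_def)
    show "(\<lambda>s. S0 (h + s) ?v) integrable_on {0..r}"
      using h by (intro integrable_continuous_interval continuous_on_compose2[OF continuous_on_S0])
        (auto intro!: continuous_intros)
  qed (use mexp_S0_le[OF q h] in auto)
  finally have step: "mexp h q *v (w - u) \<le> integral {0..r} (\<lambda>s. S0 (h + s) ?v)" .
  have "Sq f q h w - u = (Sq f q h u - u) + mexp h q *v (w - u)"
    unfolding Sq_def by (simp add: matrix_vector_mult_diff_distrib algebra_simps)
  also have "\<dots> \<le> integral {0..h} (\<lambda>s. S0 s ?v) + integral {0..r} (\<lambda>s. S0 (h + s) ?v)"
    using Sq_sub_le[OF q h] step by (rule add_mono)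
  also have "\<dots> = integral {0..h + r} (\<lambda>s. S0 s ?v)"
    using integral_S0_add[OF h r] by simp
  finally show ?thesis .
qed

lemma Echain_set_Eh_sub_le:
  "finite \<pi> \<Longrightarrow> \<pi> \<noteq> {}
    \<Longrightarrow> Echain_set (Eh P f) \<pi> u - u \<le> integral {0..Max \<pi> - Min \<pi>} (\<lambda>s. S0 s (Qop P f u))"
proof (induction \<pi> rule: finite_linorder_min_induct)
  case (insert b A)
  show ?case
  proof (cases "A = {}")
    case False
    let ?h = "Min A - b" and ?r = "Max A - Min A"
    have "Min A \<in> A" "Max A \<in> A" using insert.hyps False by simp_all
    then have h: "0 \<le> ?h" and r: "0 \<le> ?r" and MaxA: "Max (insert b A) = Max A"
      using insert.hyps False by (auto intro!: Max_eqI)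
    have "Min (insert b A) = b" using insert.hyps by (intro Min_eqI) (auto simp: less_imp_le)
    have "Sq f q ?h (Echain_set (Eh P f) A u) \<le> u + integral {0..?h + ?r} (\<lambda>s. S0 s (Qop P f u))"
      if "q \<in> P" for q
      using Sq_sub_le_step[OF that h r insert.IH[OF False]] by (simp add: algebra_simps)
    then have "Eh P f ?h (Echain_set (Eh P f) A u) \<le> u + integral {0..?h + ?r} (\<lambda>s. S0 s (Qop P f u))"
      unfolding Eh_def[of P f ?h] by (rule vsup_least[OF nonempty])
    then show ?thesis
      using insert.hyps False MaxA \<open>Min (insert b A) = b\<close>
      by (simp add: Echain_set_insert_less algebra_simps)
  qed simp
qed simp

lemma nisio_sub_le:
  assumes "0 \<le> t"
  shows "nisio P f t u - u \<le> integral {0..t} (\<lambda>s. S0 s (Qop P f u))"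
proof -
  have "nisio P f t u \<le> u + integral {0..t} (\<lambda>s. S0 s (Qop P f u))"
    unfolding nisio_def[of P f] Epi_eq_Echain_set[OF nonempty, of f]
  proof (rule vsup_least[OF partitions_nonempty[OF assms]])
    fix \<pi> assume "\<pi> \<in> partitions t"
    from partitionsD[OF this] show "Echain_set (Eh P f) \<pi> u \<le> u + integral {0..t} (\<lambda>s. S0 s (Qop P f u))"
      using Echain_set_Eh_sub_le[of \<pi> u] by (auto simp: algebra_simps)
  qed
  then show ?thesis by (simp add: algebra_simps)
qed

end

lemma bounded_action_if_Qop_bdd:
  fixes P :: "(real^'n^'n) set"
  assumes Qop_bdd: "\<And>u i. bdd_above ((\<lambda>q. (q *v u + f q) $ i) ` P)"
    and f_bdd: "\<And>q i. q \<in> P \<Longrightarrow> \<bar>f q $ i\<bar> \<le> C"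
  shows "\<exists>K. \<forall>q\<in>P. infnorm (q *v v) \<le> K"
proof -
  have bdd: "\<forall>i. \<exists>B. \<forall>q\<in>P. (q *v u + f q) $ i \<le> B" for u
    using Qop_bdd[of u] by (auto simp: bdd_above_def)
  obtain B1 where B1: "\<forall>i. \<forall>q\<in>P. (q *v v + f q) $ i \<le> B1 i"
    using choice[OF bdd[of v]] by blast
  obtain B2 where B2: "\<forall>i. \<forall>q\<in>P. (q *v (- v) + f q) $ i \<le> B2 i"
    using choice[OF bdd[of "- v"]] by blast
  let ?K = "(\<Sum>i\<in>UNIV. \<bar>B1 i\<bar> + \<bar>B2 i\<bar>) + C"
  have "\<bar>(q *v v) $ i\<bar> \<le> ?K" if q: "q \<in> P" for q i
  proof -
    have "\<bar>B1 i\<bar> + \<bar>B2 i\<bar> \<le> (\<Sum>i\<in>UNIV. \<bar>B1 i\<bar> + \<bar>B2 i\<bar>)"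
      by (rule member_le_sum[of i UNIV "\<lambda>i. \<bar>B1 i\<bar> + \<bar>B2 i\<bar>"]) auto
    moreover have "(q *v v) $ i + f q $ i \<le> B1 i" "- (q *v v) $ i + f q $ i \<le> B2 i"
      using B1 B2 q by (simp_all add: matrix_vector_mult_def sum_negf)
    moreover have "- C \<le> f q $ i" using f_bdd[OF q, of i] by linarith
    moreover have "B1 i \<le> \<bar>B1 i\<bar>" "B2 i \<le> \<bar>B2 i\<bar>" by simp_all
    ultimately show ?thesis unfolding abs_le_iff by linarith
  qed
  then show ?thesis unfolding infnorm_le_cart by blast
qed

theorem mainTheorem10:
  fixes P :: "(real^'n^'n) set" and f :: "real^'n^'n \<Rightarrow> real^'n" and q0 :: "real^'n^'n"
  assumes Qm: "\<forall>q\<in>P. is_Qmatrix q"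
    and q0: "q0 \<in> P" "f q0 = 0"
    and fle: "\<forall>q\<in>P. f q \<le> 0"
    and Qfin: "\<forall>u i. bdd_above ((\<lambda>q. (q *v u + f q) $ i) ` P)"
    and fbdd: "\<exists>C. \<forall>q\<in>P. \<forall>i. \<bar>f q $ i\<bar> \<le> C"
  shows "(\<forall>v. continuous_on {0..} (\<lambda>s. nisio P (\<lambda>_. 0) s v))
    \<and> (\<forall>u0 t. t \<ge> 0 \<longrightarrow>
          nisio P f t u0 - u0 \<le> integral {0..t} (\<lambda>s. nisio P (\<lambda>_. 0) s (Qop P f u0)))"
proof -
  obtain C where "\<And>q i. q \<in> P \<Longrightarrow> \<bar>f q $ i\<bar> \<le> C" using fbdd by blast
  with Qfin have "\<exists>K. \<forall>q\<in>P. infnorm (q *v v) \<le> K" for v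
    by (intro bounded_action_if_Qop_bdd) auto
  with Qm q0(1) Qfin interpret controlled_Qmatrix_family P f
    by unfold_locales auto
  show ?thesis by (intro conjI allI impI continuous_on_S0 nisio_sub_le)
qed

end
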